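(* Consecutive reflection points of $\mathrm{OPT}$ (in its orientation) alternate between left reflection points and right reflection points.
   Context: Instance: vertical line segments $s_1,\dots,s_n$ in $\mathbb{R}^2$, each of length $1$, with pairwise distinct $x$-coordinates. A tour is a cyclic sequence of points $p_1,\dots,p_\sigma$, each on some segment, with every segment containing at least one $p_j$; the straight segments joining consecutive points are legs. $\mathrm{OPT}$ is a fixed minimum-cost tour, oriented, with no two consecutive points on the same segment (no vertical legs) and not self-crossing. A point $p_j$ of $\mathrm{OPT}$ on segment $s$ is a left (resp. right) reflection point if both incident legs lie in $x\le x(s)$ (resp. $x\ge x(s)$). *)

theory Defs
  imports "HOL-Analysis.Analysis"
begin

text \<open>An instance consists of n vertical
segments; segment i (for i < n) is {(a i, y) | b i \<le> y \<le> b i + 1}, i.e. it has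
x-coordinate a i and length 1. A tour is a non-empty list ps of points, read
cyclically (the list order is the orientation); leg j joins ps!j to ps!((j+1) mod length ps).\<close>

definition vseg :: "(nat \<Rightarrow> real) \<Rightarrow> (nat \<Rightarrow> real) \<Rightarrow> nat \<Rightarrow> (real \<times> real) set" where
  "vseg a b i = {(a i, y) | y. b i \<le> y \<and> y \<le> b i + 1}"

definition nxt :: "nat \<Rightarrow> nat \<Rightarrow> nat" where
  "nxt \<sigma> j = (j + 1) mod \<sigma>"

definition prv :: "nat \<Rightarrow> nat \<Rightarrow> nat" where
  "prv \<sigma> j = (j + \<sigma> - 1) mod \<sigma>"

definition is_tour :: "nat \<Rightarrow> (nat \<Rightarrow> real) \<Rightarrow> (nat \<Rightarrow> real) \<Rightarrow> (real \<times> real) list \<Rightarrow> bool" where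
  "is_tour n a b ps \<longleftrightarrow> ps \<noteq> [] \<and>
     (\<forall>j < length ps. \<exists>i < n. ps ! j \<in> vseg a b i) \<and>
     (\<forall>i < n. \<exists>j < length ps. ps ! j \<in> vseg a b i)"

definition tour_cost :: "(real \<times> real) list \<Rightarrow> real" where
  "tour_cost ps = (\<Sum>j < length ps. dist (ps ! j) (ps ! nxt (length ps) j))"

definition leg :: "(real \<times> real) list \<Rightarrow> nat \<Rightarrow> (real \<times> real) set" where
  "leg ps j = closed_segment (ps ! j) (ps ! nxt (length ps) j)"

definition no_same_seg_consecutive :: "nat \<Rightarrow> (nat \<Rightarrow> real) \<Rightarrow> (nat \<Rightarrow> real) \<Rightarrow> (real \<times> real) list \<Rightarrow> bool" where
  "no_same_seg_consecutive n a b ps \<longleftrightarrow>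
     (\<forall>j < length ps. \<forall>i < n. \<not> (ps ! j \<in> vseg a b i \<and> ps ! nxt (length ps) j \<in> vseg a b i))"

definition self_crossing :: "(real \<times> real) list \<Rightarrow> bool" where
  "self_crossing ps \<longleftrightarrow> (\<exists>j < length ps. \<exists>k < length ps. j \<noteq> k \<and>
     (let p = ps ! j; q = ps ! nxt (length ps) j; r = ps ! k; s = ps ! nxt (length ps) k in
       open_segment p q \<inter> open_segment r s \<noteq> {} \<and>
       (fst q - fst p) * (snd s - snd r) - (snd q - snd p) * (fst s - fst r) \<noteq> 0))"

definition left_refl :: "nat \<Rightarrow> (nat \<Rightarrow> real) \<Rightarrow> (nat \<Rightarrow> real) \<Rightarrow> (real \<times> real) list \<Rightarrow> nat \<Rightarrow> bool" where
  "left_refl n a b ps j \<longleftrightarrow> (\<exists>i < n. ps ! j \<in> vseg a b i \<and>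
     leg ps (prv (length ps) j) \<subseteq> {z. fst z \<le> a i} \<and> leg ps j \<subseteq> {z. fst z \<le> a i})"

definition right_refl :: "nat \<Rightarrow> (nat \<Rightarrow> real) \<Rightarrow> (nat \<Rightarrow> real) \<Rightarrow> (real \<times> real) list \<Rightarrow> nat \<Rightarrow> bool" where
  "right_refl n a b ps j \<longleftrightarrow> (\<exists>i < n. ps ! j \<in> vseg a b i \<and>
     leg ps (prv (length ps) j) \<subseteq> {z. fst z \<ge> a i} \<and> leg ps j \<subseteq> {z. fst z \<ge> a i})"

definition refl_pt :: "nat \<Rightarrow> (nat \<Rightarrow> real) \<Rightarrow> (nat \<Rightarrow> real) \<Rightarrow> (real \<times> real) list \<Rightarrow> nat \<Rightarrow> bool" where
  "refl_pt n a b ps j \<longleftrightarrow> left_refl n a b ps j \<or> right_refl n a b ps j"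

end

theory Submission
  imports Defs
begin

text \<open>Since consecutive points of OPT lie on different segments, which have pairwise distinct
x-coordinates, consecutive x-coordinates along the tour differ; and a leg lies in a half-plane
bounded by a vertical line iff both of its endpoints do. Hence the left (right) reflection
points are exactly the strict local maxima (minima) of the cyclic sequence of x-coordinates.
Leaving a local maximum, this sequence decreases until it reaches a local minimum, so the next
reflection point after a left one is a right one, and symmetrically.\<close>

lemma convex_fst_le: "convex {z :: real \<times> 'b::real_vector. fst z \<le> c}"
  using convex_linear_vimage[OF linear_fst convex_real_interval(2)[of c]]
  by (simp add: vimage_def atMost_def)

lemma convex_fst_ge: "convex {z :: real \<times> 'b::real_vector. fst z \<ge> c}"
  using convex_linear_vimage[OF linear_fst convex_real_interval(1)[of c]]
  by (simp add: vimage_def atLeast_def)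

lemma closed_segment_subset_fst_le:
  fixes p q :: "real \<times> 'b::real_vector"
  shows "closed_segment p q \<subseteq> {z. fst z \<le> c} \<longleftrightarrow> fst p \<le> c \<and> fst q \<le> c"
proof
  assume "closed_segment p q \<subseteq> {z. fst z \<le> c}"
  then show "fst p \<le> c \<and> fst q \<le> c" using ends_in_segment by blast
next
  assume "fst p \<le> c \<and> fst q \<le> c"
  then show "closed_segment p q \<subseteq> {z. fst z \<le> c}"
    by (intro closed_segment_subset convex_fst_le) auto
qed

lemma closed_segment_subset_fst_ge:
  fixes p q :: "real \<times> 'b::real_vector"
  shows "closed_segment p q \<subseteq> {z. fst z \<ge> c} \<longleftrightarrow> fst p \<ge> c \<and> fst q \<ge> c"
proof
  assume "closed_segment p q \<subseteq> {z. fst z \<ge> c}"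
  then show "fst p \<ge> c \<and> fst q \<ge> c" using ends_in_segment by blast
next
  assume "fst p \<ge> c \<and> fst q \<ge> c"
  then show "closed_segment p q \<subseteq> {z. fst z \<ge> c}"
    by (intro closed_segment_subset convex_fst_ge) auto
qed

lemma decreasing_before_local_min:
  fixes X :: "nat \<Rightarrow> 'a::linorder"
  assumes start: "X (Suc 0) < X 0"
    and neq: "\<And>m. X (Suc m) \<noteq> X m"
    and no_min: "\<And>m. Suc m < d \<Longrightarrow> \<not> (X (Suc m) < X m \<and> X (Suc m) < X (Suc (Suc m)))"
  shows "m < d \<Longrightarrow> X (Suc m) < X m"
proof (induction m)
  case 0
  show ?case by (rule start)
next
  case (Suc m)
  then have "X (Suc m) < X m" by simp
  with no_min[OF Suc.prems] neq[of "Suc m"] show ?case by auto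
qed

lemma increasing_before_local_max:
  fixes X :: "nat \<Rightarrow> 'a::linordered_ab_group_add"
  assumes "X 0 < X (Suc 0)"
    and "\<And>m. X (Suc m) \<noteq> X m"
    and "\<And>m. Suc m < d \<Longrightarrow> \<not> (X m < X (Suc m) \<and> X (Suc (Suc m)) < X (Suc m))"
  shows "m < d \<Longrightarrow> X m < X (Suc m)"
  using decreasing_before_local_min[of "\<lambda>m. - X m" d m] assms by simp

lemma add_mod_distance:
  fixes j k L :: nat
  assumes "j < L" "k < L"
  shows "(j + (k + L - j) mod L) mod L = k"
proof -
  have "(j + (k + L - j) mod L) mod L = (j + (k + L - j)) mod L"
    by (simp add: mod_add_right_eq)
  also have "\<dots> = k" using assms by simp
  finally show ?thesis .
qed

lemma mod_distance_pos:
  fixes j k L :: nat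
  assumes "j < L" "k < L" "j \<noteq> k"
  shows "0 < (k + L - j) mod L"
proof (rule ccontr)
  assume "\<not> 0 < (k + L - j) mod L"
  then have "j mod L = k" using add_mod_distance[OF assms(1,2)] by simp
  then show False using assms by simp
qed

lemma nxt_prv:
  assumes "p < L"
  shows "nxt L (prv L p) = p"
proof -
  have "nxt L (prv L p) = (p + L - 1 + 1) mod L"
    unfolding nxt_def prv_def by (rule mod_add_left_eq)
  also have "\<dots> = p" using assms by simp
  finally show ?thesis .
qed

lemma fst_vseg: "p \<in> vseg a b i \<Longrightarrow> fst p = a i"
  unfolding vseg_def by auto

locale segment_tour =
  fixes n :: nat and a b :: "nat \<Rightarrow> real" and ps :: "(real \<times> real) list"
  assumes distinct_x: "inj_on a {..<n}"
    and tour: "is_tour n a b ps"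
    and no_vertical: "no_same_seg_consecutive n a b ps"
begin

abbreviation L :: nat where "L \<equiv> length ps"

definition x_at :: "nat \<Rightarrow> real" where
  "x_at p = fst (ps ! (p mod L))"

lemma length_pos: "0 < L"
  using tour unfolding is_tour_def by auto

lemma x_at_add_length [simp]: "x_at (p + L) = x_at p"
  unfolding x_at_def by simp

lemma on_some_segment: "\<exists>i<n. ps ! (p mod L) \<in> vseg a b i"
  using tour length_pos unfolding is_tour_def by auto

lemma a_eq_x_at: "ps ! (p mod L) \<in> vseg a b i \<Longrightarrow> a i = x_at p"
  unfolding x_at_def using fst_vseg[of "ps ! (p mod L)" a b i] by simp

lemma nxt_mod: "nxt L (p mod L) = Suc p mod L"
  unfolding nxt_def by (simp add: mod_Suc_eq)

lemma prv_mod: "prv L (p mod L) = (p + L - 1) mod L"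
proof -
  have L1: "1 \<le> L" using length_pos by linarith
  have "prv L (p mod L) = (p mod L + (L - 1)) mod L"
    unfolding prv_def by (simp only: add_diff_assoc[OF L1])
  also have "\<dots> = (p + (L - 1)) mod L" by (rule mod_add_left_eq)
  also have "\<dots> = (p + L - 1) mod L" by (simp only: add_diff_assoc[OF L1])
  finally show ?thesis .
qed

lemma x_at_Suc_neq: "x_at (Suc p) \<noteq> x_at p"
proof
  assume eq: "x_at (Suc p) = x_at p"
  obtain i where i: "i < n" "ps ! (p mod L) \<in> vseg a b i" using on_some_segment by blast
  obtain i' where i': "i' < n" "ps ! (Suc p mod L) \<in> vseg a b i'" using on_some_segment by blast
  have "a i' = a i" using eq a_eq_x_at[OF i(2)] a_eq_x_at[OF i'(2)] by simp
  then have "i' = i" using distinct_x i i' by (auto dest: inj_onD)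
  moreover have "p mod L < L" using length_pos by simp
  ultimately show False
    using no_vertical i i' nxt_mod[of p] unfolding no_same_seg_consecutive_def by auto
qed

lemma x_at_pred_neq: "x_at (p + L - 1) \<noteq> x_at p"
  using x_at_Suc_neq[of "p + L - 1"] length_pos by simp

lemma left_refl_iff_le:
  "left_refl n a b ps (p mod L) \<longleftrightarrow> x_at (p + L - 1) \<le> x_at p \<and> x_at (Suc p) \<le> x_at p"
proof -
  have legs: "leg ps (prv L (p mod L)) = closed_segment (ps ! ((p + L - 1) mod L)) (ps ! (p mod L))"
    "leg ps (p mod L) = closed_segment (ps ! (p mod L)) (ps ! (Suc p mod L))"
    unfolding leg_def using nxt_prv[of "p mod L"] length_pos by (simp_all add: prv_mod nxt_mod)
  have "left_refl n a b ps (p mod L) \<longleftrightarrow> (\<exists>i<n. ps ! (p mod L) \<in> vseg a b i \<and>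
      x_at (p + L - 1) \<le> a i \<and> x_at p \<le> a i \<and> x_at (Suc p) \<le> a i)"
    unfolding left_refl_def legs closed_segment_subset_fst_le x_at_def by simp
  also have "\<dots> \<longleftrightarrow> x_at (p + L - 1) \<le> x_at p \<and> x_at (Suc p) \<le> x_at p"
    using on_some_segment a_eq_x_at[of p] by (metis order_refl)
  finally show ?thesis .
qed

lemma right_refl_iff_ge:
  "right_refl n a b ps (p mod L) \<longleftrightarrow> x_at (p + L - 1) \<ge> x_at p \<and> x_at (Suc p) \<ge> x_at p"
proof -
  have legs: "leg ps (prv L (p mod L)) = closed_segment (ps ! ((p + L - 1) mod L)) (ps ! (p mod L))"
    "leg ps (p mod L) = closed_segment (ps ! (p mod L)) (ps ! (Suc p mod L))"
    unfolding leg_def using nxt_prv[of "p mod L"] length_pos by (simp_all add: prv_mod nxt_mod)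
  have "right_refl n a b ps (p mod L) \<longleftrightarrow> (\<exists>i<n. ps ! (p mod L) \<in> vseg a b i \<and>
      x_at (p + L - 1) \<ge> a i \<and> x_at p \<ge> a i \<and> x_at (Suc p) \<ge> a i)"
    unfolding right_refl_def legs closed_segment_subset_fst_ge x_at_def by simp
  also have "\<dots> \<longleftrightarrow> x_at (p + L - 1) \<ge> x_at p \<and> x_at (Suc p) \<ge> x_at p"
    using on_some_segment a_eq_x_at[of p] by (metis order_refl)
  finally show ?thesis .
qed

lemma left_refl_iff:
  "left_refl n a b ps (p mod L) \<longleftrightarrow> x_at (p + L - 1) < x_at p \<and> x_at (Suc p) < x_at p"
  using left_refl_iff_le[of p] x_at_pred_neq[of p] x_at_Suc_neq[of p] by auto

lemma right_refl_iff:
  "right_refl n a b ps (p mod L) \<longleftrightarrow> x_at p < x_at (p + L - 1) \<and> x_at p < x_at (Suc p)"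
  using right_refl_iff_ge[of p] x_at_pred_neq[of p] x_at_Suc_neq[of p] by auto

lemma left_refl_Suc_iff:
  "left_refl n a b ps (Suc q mod L) \<longleftrightarrow> x_at q < x_at (Suc q) \<and> x_at (Suc (Suc q)) < x_at (Suc q)"
  using left_refl_iff[of "Suc q"] x_at_add_length[of q] by simp

lemma right_refl_Suc_iff:
  "right_refl n a b ps (Suc q mod L) \<longleftrightarrow> x_at (Suc q) < x_at q \<and> x_at (Suc q) < x_at (Suc (Suc q))"
  using right_refl_iff[of "Suc q"] x_at_add_length[of q] by simp

lemma right_refl_after_left_refl:
  assumes left: "left_refl n a b ps (j mod L)"
    and none: "\<And>m. Suc m < d \<Longrightarrow> \<not> refl_pt n a b ps ((j + Suc m) mod L)"
    and d: "0 < d" and refl: "refl_pt n a b ps ((j + d) mod L)"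
  shows "right_refl n a b ps ((j + d) mod L)"
proof -
  obtain e where e: "d = Suc e" using d gr0_implies_Suc by blast
  have "x_at (j + Suc e) < x_at (j + e)"
  proof (rule decreasing_before_local_min[where X = "\<lambda>m. x_at (j + m)" and d = d])
    show "x_at (j + Suc 0) < x_at (j + 0)" using left left_refl_iff[of j] by simp
    show "x_at (j + Suc m) \<noteq> x_at (j + m)" for m using x_at_Suc_neq by simp
    show "\<not> (x_at (j + Suc m) < x_at (j + m) \<and> x_at (j + Suc m) < x_at (j + Suc (Suc m)))"
      if "Suc m < d" for m
      using none[OF that] right_refl_Suc_iff[of "j + m"] unfolding refl_pt_def by simp
    show "e < d" using e by simp
  qed
  then show ?thesis using refl left_refl_Suc_iff[of "j + e"] e unfolding refl_pt_def by auto
qed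

lemma left_refl_after_right_refl:
  assumes right: "right_refl n a b ps (j mod L)"
    and none: "\<And>m. Suc m < d \<Longrightarrow> \<not> refl_pt n a b ps ((j + Suc m) mod L)"
    and d: "0 < d" and refl: "refl_pt n a b ps ((j + d) mod L)"
  shows "left_refl n a b ps ((j + d) mod L)"
proof -
  obtain e where e: "d = Suc e" using d gr0_implies_Suc by blast
  have "x_at (j + e) < x_at (j + Suc e)"
  proof (rule increasing_before_local_max[where X = "\<lambda>m. x_at (j + m)" and d = d])
    show "x_at (j + 0) < x_at (j + Suc 0)" using right right_refl_iff[of j] by simp
    show "x_at (j + Suc m) \<noteq> x_at (j + m)" for m using x_at_Suc_neq by simp
    show "\<not> (x_at (j + m) < x_at (j + Suc m) \<and> x_at (j + Suc (Suc m)) < x_at (j + Suc m))"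
      if "Suc m < d" for m
      using none[OF that] left_refl_Suc_iff[of "j + m"] unfolding refl_pt_def by simp
    show "e < d" using e by simp
  qed
  then show ?thesis using refl right_refl_Suc_iff[of "j + e"] e unfolding refl_pt_def by auto
qed

end

theorem corollary1:
  fixes n :: nat and a b :: "nat \<Rightarrow> real" and OPT :: "(real \<times> real) list"
  assumes distinct_x: "inj_on a {..<n}"
    and tour: "is_tour n a b OPT"
    and optimal: "\<And>T. is_tour n a b T \<Longrightarrow> tour_cost OPT \<le> tour_cost T"
    and no_vertical: "no_same_seg_consecutive n a b OPT"
    and no_cross: "\<not> self_crossing OPT"
    and j: "j < length OPT" and k: "k < length OPT" and jk: "j \<noteq> k"
    and refl_j: "refl_pt n a b OPT j" and refl_k: "refl_pt n a b OPT k"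
    and between: "\<And>m. 0 < m \<Longrightarrow> m < (k + length OPT - j) mod length OPT \<Longrightarrow>
                    \<not> refl_pt n a b OPT ((j + m) mod length OPT)"
  shows "(left_refl n a b OPT j \<and> right_refl n a b OPT k) \<or>
         (right_refl n a b OPT j \<and> left_refl n a b OPT k)"
proof -
  interpret segment_tour n a b OPT
    using distinct_x tour no_vertical by unfold_locales
  define d where "d = (k + L - j) mod L"
  have d: "0 < d" using mod_distance_pos[OF j k jk] d_def by simp
  have j_eq: "j mod L = j" using j by simp
  have k_eq: "(j + d) mod L = k" using add_mod_distance[OF j k] d_def by simp
  have none: "\<not> refl_pt n a b OPT ((j + Suc m) mod L)" if "Suc m < d" for m
    using between[of "Suc m"] that d_def by simp
  from refl_j consider "left_refl n a b OPT j" | "right_refl n a b OPT j"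
    unfolding refl_pt_def by blast
  then show ?thesis
  proof cases
    case 1
    then show ?thesis
      using right_refl_after_left_refl[of j d] none d refl_k j_eq k_eq by simp
  next
    case 2
    then show ?thesis
      using left_refl_after_right_refl[of j d] none d refl_k j_eq k_eq by simp
  qed
qed

end
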